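(* In the Fock space setting below, let $N\in\mathbb N$, $\alpha_n\in\mathcal B_n(B)$ for $n\in\{0,1,\ldots,N\}$, fix $i\in I$ and let \[ X=\sum_{n=0}^{N-1}\big(V_{i,n}(\alpha_n)+W_{i,n}(\alpha_n)\big),\qquad Y=X+V_{i,N}(\alpha_N)+W_{i,N}(\alpha_N). \] Then for all $b_0,\ldots,b_N\in B$, \[ \mathcal E(b_0Yb_1Y\cdots b_NY)=b_0\,\alpha_N(b_1\alpha_0,b_2\alpha_0,\ldots,b_N\alpha_0)+\mathcal E(b_0Xb_1X\cdots b_NX), \] where $b_j$ acts as $\lambda(b_j)$.
   Context: Let $B$ be a unital complex Banach algebra, $I$ a set, $\mathbb N=\{1,2,\ldots\}$. $D=\ell^1(I,B)$ is the Banach space of functions $d:I\to B$ with $\sum_i\|d(i)\|<\infty$, with left $B$-action $(bd)(i)=b\,d(i)$; $\delta_i\in D$ is $1$ at $i$ and $0$ elsewhere. $\mathcal F=B\Omega\oplus\bigoplus_{k\ge1}D^{\hat\otimes k}\hat\otimes B$ ($\ell^1$-direct sum of projective tensor products), with $B\Omega$ a copy of $B$ and $\Omega$ its unit. $\lambda(b)$: $b_0\Omega\mapsto(bb_0)\Omega$, $d_1\otimes\cdots\otimes d_k\otimes b_0\mapsto(bd_1)\otimes d_2\otimes\cdots\otimes d_k\otimes b_0$. $P:\mathcal F\to B$ is the projection onto $B\Omega$ killing the other summands, $\mathcal E(X)=P(X\Omega)$. $L_i(b_0\Omega)=\delta_i\otimes b_0$, $L_i(d_1\otimes\cdots\otimes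 d_k\otimes b_0)=\delta_i\otimes d_1\otimes\cdots\otimes d_k\otimes b_0$. $\mathcal B_n(B)$ is the set of bounded multilinear maps $B^n\to B$, $\mathcal B_0(B)=B$. For $n\ge1$, $\alpha_n\in\mathcal B_n(B)$: $V_{i,n}(\alpha_n)$ and $W_{i,n}(\alpha_n)$ vanish on $B\Omega$ and on $d_1\otimes\cdots\otimes d_k\otimes b_0$ with $k<n$; for $k=n$ they give $\alpha_n(d_1(i),\ldots,d_n(i))b_0\Omega$ and $\alpha_n(d_1(i),\ldots,d_n(i))\delta_i\otimes b_0$ respectively; for $k>n$ they give $\alpha_n(d_1(i),\ldots,d_n(i))d_{n+1}\otimes\cdots\otimes d_k\otimes b_0$ and $\alpha_n(d_1(i),\ldots,d_n(i))\delta_i\otimes d_{n+1}\otimes\cdots\otimes d_k\otimes b_0$ respectively. For $\alpha_0\in B$: $V_{i,0}(\alpha_0)=\lambda(\alpha_0)$, $W_{i,0}(\alpha_0)=\lambda(\alpha_0)L_i$. *)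

theory Defs
  imports "HOL-Analysis.Analysis"
begin

text \<open>A unital complex Banach algebra is modelled as a type of class real_normed_algebra_1
  and banach together with a map iota from the complex numbers into its centre that extends
  the real scalars, is a unital ring homomorphism and is compatible with the norm;
  complex scalar multiplication c x is then iota c * x.\<close>

definition complex_structure :: "(complex \<Rightarrow> 'b::{real_normed_algebra_1,banach}) \<Rightarrow> bool" where
  "complex_structure \<iota> \<longleftrightarrow>
     (\<forall>r. \<iota> (complex_of_real r) = of_real r) \<and>
     (\<forall>c d. \<iota> (c + d) = \<iota> c + \<iota> d) \<and>
     (\<forall>c d. \<iota> (c * d) = \<iota> c * \<iota> d) \<and>
     (\<forall>c x. \<iota> c * x = x * \<iota> c) \<and>
     (\<forall>c x. norm (\<iota> c * x) = cmod c * norm x)"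

definition bounded_multilinear_n ::
  "(complex \<Rightarrow> 'b::{real_normed_algebra_1,banach}) \<Rightarrow> nat \<Rightarrow> ('b list \<Rightarrow> 'b) \<Rightarrow> bool" where
  "bounded_multilinear_n \<iota> n f \<longleftrightarrow>
     (\<forall>xs ys x y. length xs + length ys + 1 = n \<longrightarrow>
        f (xs @ (x + y) # ys) = f (xs @ x # ys) + f (xs @ y # ys)) \<and>
     (\<forall>xs ys x c. length xs + length ys + 1 = n \<longrightarrow>
        f (xs @ (\<iota> c * x) # ys) = \<iota> c * f (xs @ x # ys)) \<and>
     (\<exists>K. \<forall>xs. length xs = n \<longrightarrow> norm (f xs) \<le> K * prod_list (map norm xs))"

text \<open>An elementary tensor d_1 (x) ... (x) d_k (x) b_0 is the pair (ds, b_0) with ds = [d_1,...,d_k];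
  the pair ([], b_0) is b_0 Omega.  Elements d of D are functions I to B.
  A vector is a finite formal sum of elementary tensors (a list).
  Operators are given on elementary tensors and extended additively.\<close>

type_synonym ('i,'b) etensor = "('i \<Rightarrow> 'b) list \<times> 'b"
type_synonym ('i,'b) fock = "('i,'b) etensor list"

definition delta :: "'i \<Rightarrow> 'i \<Rightarrow> 'b::{real_normed_algebra_1,banach}" where
  "delta i = (\<lambda>j. if j = i then 1 else 0)"

definition Omega :: "('i,'b::{real_normed_algebra_1,banach}) fock" where
  "Omega = [([], 1)]"

definition ext_op :: "(('i,'b) etensor \<Rightarrow> ('i,'b) fock) \<Rightarrow> ('i,'b) fock \<Rightarrow> ('i,'b) fock" where
  "ext_op f v = concat (map f v)"

definition lam_e :: "'b::{real_normed_algebra_1,banach} \<Rightarrow> ('i,'b) etensor \<Rightarrow> ('i,'b) fock" where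
  "lam_e b t = (case t of
      ([], b0) \<Rightarrow> [([], b * b0)]
    | (d # ds, b0) \<Rightarrow> [((\<lambda>j. b * d j) # ds, b0)])"

definition L_e :: "'i \<Rightarrow> ('i,'b::{real_normed_algebra_1,banach}) etensor \<Rightarrow> ('i,'b) fock" where
  "L_e i t = [(delta i # fst t, snd t)]"

definition V_e :: "'i \<Rightarrow> nat \<Rightarrow> ('b list \<Rightarrow> 'b) \<Rightarrow> ('i,'b::{real_normed_algebra_1,banach}) etensor
    \<Rightarrow> ('i,'b) fock" where
  "V_e i n \<alpha> t =
    (if n = 0 then lam_e (\<alpha> []) t
     else (let ds = fst t; b0 = snd t; a = \<alpha> (map (\<lambda>d. d i) (take n ds)) in
       if length ds < n then []
       else if length ds = n then [([], a * b0)]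
       else [((\<lambda>j. a * (ds ! n) j) # drop (Suc n) ds, b0)]))"

definition W_e :: "'i \<Rightarrow> nat \<Rightarrow> ('b list \<Rightarrow> 'b) \<Rightarrow> ('i,'b::{real_normed_algebra_1,banach}) etensor
    \<Rightarrow> ('i,'b) fock" where
  "W_e i n \<alpha> t =
    (if n = 0 then ext_op (lam_e (\<alpha> [])) (L_e i t)
     else (let ds = fst t; b0 = snd t; a = \<alpha> (map (\<lambda>d. d i) (take n ds)) in
       if length ds < n then []
       else if length ds = n then [([(\<lambda>j. a * delta i j)], b0)]
       else [((\<lambda>j. a * delta i j) # drop n ds, b0)]))"

definition VW_sum_e :: "(nat \<Rightarrow> 'b list \<Rightarrow> 'b) \<Rightarrow> 'i \<Rightarrow> nat \<Rightarrow> ('i,'b::{real_normed_algebra_1,banach}) etensor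
    \<Rightarrow> ('i,'b) fock" where
  "VW_sum_e \<alpha> i M t = concat (map (\<lambda>n. V_e i n (\<alpha> n) t @ W_e i n (\<alpha> n) t) [0..<M])"

definition Pproj :: "('i,'b::{real_normed_algebra_1,banach}) fock \<Rightarrow> 'b" where
  "Pproj v = sum_list (map snd (filter (\<lambda>t. fst t = []) v))"

text \<open>The word b_0 Z b_1 Z ... b_N Z applied to a vector, Z given on elementary tensors.\<close>

definition word_apply :: "(('i,'b) etensor \<Rightarrow> ('i,'b) fock) \<Rightarrow> (nat \<Rightarrow> 'b::{real_normed_algebra_1,banach})
    \<Rightarrow> nat \<Rightarrow> ('i,'b) fock \<Rightarrow> ('i,'b) fock" where
  "word_apply Z b N = foldr (\<lambda>j acc. ext_op (lam_e (b j)) \<circ> ext_op Z \<circ> acc) [0..<Suc N] id"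

text \<open>E(b_0 Z b_1 Z ... b_N Z) = P(b_0 Z ... b_N Z Omega).\<close>

definition E_word :: "(('i,'b) etensor \<Rightarrow> ('i,'b) fock) \<Rightarrow> (nat \<Rightarrow> 'b::{real_normed_algebra_1,banach})
    \<Rightarrow> nat \<Rightarrow> 'b" where
  "E_word Z b N = Pproj (word_apply Z b N Omega)"

end

theory Submission
  imports Defs
begin

text \<open>Apply the word to Omega from the right. Every summand of X or Y lengthens an
  elementary tensor by at most one, and only the term W_{i,0}(alpha_0) does so, by prepending
  alpha_0 delta_i. Hence after the letters b_N Y, ..., b_1 Y the vector has degree at most N,
  its degree-N part is the single tensor (b_1 alpha_0 delta_i) (x) ... (x) (b_N alpha_0 delta_i) (x) 1,
  and so far Y acted like X, because V_{i,N}(alpha_N) and W_{i,N}(alpha_N) kill tensors of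
  degree below N. In the last letter b_0 Y these two terms see only that degree-N tensor:
  V_{i,N}(alpha_N) maps it to alpha_N(b_1 alpha_0, ..., b_N alpha_0) Omega, while
  W_{i,N}(alpha_N) maps it to degree one, which P discards.\<close>

lemma ext_op_Nil [simp]: "ext_op f [] = []"
  and ext_op_Cons [simp]: "ext_op f (t # v) = f t @ ext_op f v"
  by (simp_all add: ext_op_def)

lemma ext_op_cong: "(\<And>t. t \<in> set v \<Longrightarrow> f t = g t) \<Longrightarrow> ext_op f v = ext_op g v"
  by (induction v) auto

lemma lam_e_Nil [simp]: "lam_e c ([], b0) = [([], c * b0)]"
  and lam_e_Cons [simp]: "lam_e c (d # ds, b0) = [((\<lambda>j. c * d j) # ds, b0)]"
  by (simp_all add: lam_e_def)

lemma Pproj_Nil [simp]: "Pproj [] = 0"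
  and Pproj_Cons_Nil [simp]: "Pproj (([], b0) # v) = b0 + Pproj v"
  and Pproj_Cons_Cons [simp]: "Pproj ((d # ds, b0) # v) = Pproj v"
  and Pproj_append [simp]: "Pproj (v @ w) = Pproj v + Pproj w"
  by (simp_all add: Pproj_def)

lemma Pproj_ext_op: "Pproj (ext_op f v) = (\<Sum>t\<leftarrow>v. Pproj (f t))"
  by (induction v) simp_all

lemma Pproj_ext_op_lam_e: "Pproj (ext_op (lam_e c) v) = c * Pproj v"
proof (induction v)
  case (Cons t v)
  then show ?case
    by (cases t; cases "fst t") (simp_all add: algebra_simps)
qed simp

definition degree_le :: "nat \<Rightarrow> ('i,'b) fock \<Rightarrow> bool" where
  "degree_le k v \<longleftrightarrow> (\<forall>s\<in>set v. length (fst s) \<le> k)"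

definition homog_part :: "nat \<Rightarrow> ('i,'b) fock \<Rightarrow> ('i,'b) fock" where
  "homog_part k v = filter (\<lambda>s. length (fst s) = k) v"

lemma degree_le_mono: "k \<le> k' \<Longrightarrow> degree_le k v \<Longrightarrow> degree_le k' v"
  by (auto simp: degree_le_def)

lemma degree_le_append [simp]: "degree_le k (v @ w) \<longleftrightarrow> degree_le k v \<and> degree_le k w"
  and degree_le_concat [simp]: "degree_le k (concat vs) \<longleftrightarrow> (\<forall>v\<in>set vs. degree_le k v)"
  by (auto simp: degree_le_def)

lemma degree_le_ext_op:
  assumes "degree_le k v" and "\<And>t. t \<in> set v \<Longrightarrow> degree_le (length (fst t) + d) (f t)"
  shows "degree_le (k + d) (ext_op f v)"
  using assms by (fastforce simp: degree_le_def ext_op_def)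

lemma homog_part_Nil [simp]: "homog_part k [] = []"
  and homog_part_Cons [simp]:
    "homog_part k (t # v) = (if length (fst t) = k then t # homog_part k v else homog_part k v)"
  and homog_part_append [simp]: "homog_part k (v @ w) = homog_part k v @ homog_part k w"
  by (simp_all add: homog_part_def)

lemma homog_part_concat [simp]: "homog_part k (concat vs) = concat (map (homog_part k) vs)"
  by (induction vs) simp_all

lemma homog_part_eq_Nil: "degree_le k v \<Longrightarrow> k < k' \<Longrightarrow> homog_part k' v = []"
  by (induction v) (auto simp: degree_le_def)

lemma homog_part_ext_op:
  assumes "degree_le k v" and "\<And>t. t \<in> set v \<Longrightarrow> degree_le (Suc (length (fst t))) (f t)"
  shows "homog_part (Suc k) (ext_op f v)
           = ext_op (\<lambda>t. homog_part (Suc (length (fst t))) (f t)) (homog_part k v)"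
  using assms
proof (induction v)
  case (Cons t v)
  have "length (fst t) < k \<Longrightarrow> homog_part (Suc k) (f t) = []"
    using Cons.prems(2)[of t] by (fastforce simp: homog_part_def degree_le_def filter_empty_conv)
  with Cons show ?case
    by (auto simp: degree_le_def)
qed simp

lemma ext_op_homog_part:
  assumes "degree_le k v" and "\<And>t. length (fst t) < k \<Longrightarrow> f t = []"
  shows "ext_op f v = ext_op f (homog_part k v)"
  using assms by (induction v) (auto simp: degree_le_def)

lemma degree_le_lam_e: "degree_le (length (fst t)) (lam_e c t)"
  by (cases t; cases "fst t") (simp_all add: degree_le_def)

lemma homog_part_ext_op_lam_e: "homog_part k (ext_op (lam_e c) v) = ext_op (lam_e c) (homog_part k v)"
proof (induction v)
  case (Cons t v)
  then show ?case
    by (cases t; cases "fst t") auto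
qed simp

lemma W_e_0: "W_e i 0 a t = [((\<lambda>j. a [] * delta i j) # fst t, snd t)]"
  by (simp add: W_e_def L_e_def)

lemma degree_le_V_e: "degree_le (length (fst t)) (V_e i n a t)"
proof (cases "n = 0")
  case True
  then show ?thesis
    by (simp add: V_e_def degree_le_lam_e)
next
  case False
  then show ?thesis
    by (auto simp: V_e_def Let_def degree_le_def)
qed

lemma degree_le_W_e_pos: "0 < n \<Longrightarrow> degree_le (length (fst t)) (W_e i n a t)"
  by (auto simp: W_e_def Let_def degree_le_def)

lemma degree_le_W_e: "degree_le (Suc (length (fst t))) (W_e i n a t)"
proof (cases "n = 0")
  case True
  then show ?thesis
    by (simp add: W_e_0 degree_le_def)
next
  case False
  then show ?thesis
    by (intro degree_le_mono[OF _ degree_le_W_e_pos]) simp_all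
qed

lemma degree_le_VW_sum_e: "degree_le (Suc (length (fst t))) (VW_sum_e \<alpha> i M t)"
proof -
  have "degree_le (Suc (length (fst t))) (V_e i n a t)" for n a
    by (rule degree_le_mono[OF _ degree_le_V_e]) simp
  then show ?thesis
    using degree_le_W_e[of t] by (simp add: VW_sum_e_def)
qed

lemma homog_part_VW_sum_e:
  assumes "0 < M"
  shows "homog_part (Suc (length (fst t))) (VW_sum_e \<alpha> i M t)
           = [((\<lambda>j. \<alpha> 0 [] * delta i j) # fst t, snd t)]"
proof -
  have "[0..<M] = 0 # [1..<M]"
    using assms upt_conv_Cons by auto
  then show ?thesis
    by (simp add: VW_sum_e_def W_e_0 homog_part_eq_Nil[OF degree_le_V_e]
        homog_part_eq_Nil[OF degree_le_W_e_pos] cong: map_cong)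
qed

lemma VW_sum_e_Suc:
  "VW_sum_e \<alpha> i (Suc M) t = VW_sum_e \<alpha> i M t @ V_e i M (\<alpha> M) t @ W_e i M (\<alpha> M) t"
  by (simp add: VW_sum_e_def)

lemma V_e_W_e_short:
  assumes "0 < n" and "length (fst t) < n"
  shows "V_e i n a t = []" and "W_e i n a t = []"
  using assms by (simp_all add: V_e_def W_e_def Let_def)

lemma V_e_degree_eq:
  "0 < n \<Longrightarrow> length ds = n \<Longrightarrow> V_e i n a (ds, b0) = [([], a (map (\<lambda>d. d i) ds) * b0)]"
  by (simp add: V_e_def)

lemma Pproj_W_e_pos: "0 < n \<Longrightarrow> Pproj (W_e i n a t) = 0"
  by (simp add: W_e_def Let_def)

lemma Pproj_ext_op_VW_sum_e_Suc:
  "Pproj (ext_op (VW_sum_e \<alpha> i (Suc M)) v)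
     = Pproj (ext_op (VW_sum_e \<alpha> i M) v) + Pproj (ext_op (\<lambda>t. V_e i M (\<alpha> M) t @ W_e i M (\<alpha> M) t) v)"
  by (simp add: VW_sum_e_Suc Pproj_ext_op sum_list_addf)

lemma Pproj_ext_op_V_e_W_e_top:
  assumes "0 < n" and "degree_le n v" and top: "homog_part n v = [(ds, b0)]"
  shows "Pproj (ext_op (\<lambda>t. V_e i n a t @ W_e i n a t) v) = a (map (\<lambda>d. d i) ds) * b0"
proof -
  have "(ds, b0) \<in> set (homog_part n v)"
    using top by simp
  then have "length ds = n"
    by (simp add: homog_part_def)
  moreover have "ext_op (\<lambda>t. V_e i n a t @ W_e i n a t) v = V_e i n a (ds, b0) @ W_e i n a (ds, b0)"
    using ext_op_homog_part[OF assms(2), of "\<lambda>t. V_e i n a t @ W_e i n a t"] top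
    by (simp add: V_e_W_e_short[OF assms(1)])
  ultimately show ?thesis
    by (simp add: V_e_degree_eq[OF assms(1)] Pproj_W_e_pos[OF assms(1)])
qed

abbreviation letter_apply :: "(('i,'b) etensor \<Rightarrow> ('i,'b) fock) \<Rightarrow> 'b::{real_normed_algebra_1,banach}
    \<Rightarrow> ('i,'b) fock \<Rightarrow> ('i,'b) fock" where
  "letter_apply Z c v \<equiv> ext_op (lam_e c) (ext_op Z v)"

abbreviation word_Omega :: "(('i,'b) etensor \<Rightarrow> ('i,'b) fock) \<Rightarrow> (nat \<Rightarrow> 'b::{real_normed_algebra_1,banach})
    \<Rightarrow> nat list \<Rightarrow> ('i,'b) fock" where
  "word_Omega Z b js \<equiv> foldr (\<lambda>j. letter_apply Z (b j)) js Omega"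

lemma foldr_comp_id: "foldr (\<lambda>x g. f x \<circ> g) xs id = foldr f xs"
  by (induction xs) auto

lemma word_apply_eq_foldr: "word_apply Z b N = foldr (\<lambda>j. letter_apply Z (b j)) [0..<Suc N]"
  unfolding word_apply_def comp_assoc[symmetric] foldr_comp_id
  by (simp add: comp_def)

lemma E_word_eq_Pproj: "E_word Z b N = b 0 * Pproj (ext_op Z (word_Omega Z b [1..<Suc N]))"
proof -
  have "[0..<Suc N] = 0 # [1..<Suc N]"
    by (simp add: upt_conv_Cons)
  then show ?thesis
    by (simp add: E_word_def word_apply_eq_foldr Pproj_ext_op_lam_e)
qed

lemma degree_le_word_Omega: "degree_le (length js) (word_Omega (VW_sum_e \<alpha> i M) b js)"
proof (induction js)
  case (Cons j js)
  have "degree_le (length js + 1) (ext_op (VW_sum_e \<alpha> i M) (word_Omega (VW_sum_e \<alpha> i M) b js))"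
    by (rule degree_le_ext_op[OF Cons.IH]) (simp add: degree_le_VW_sum_e)
  then have "degree_le (length js + 1 + 0) (ext_op (lam_e (b j)) (ext_op (VW_sum_e \<alpha> i M)
      (word_Omega (VW_sum_e \<alpha> i M) b js)))"
    by (rule degree_le_ext_op) (simp add: degree_le_lam_e)
  then show ?case
    by simp
qed (simp add: Omega_def degree_le_def)

lemma homog_part_word_Omega:
  assumes "0 < M"
  shows "homog_part (length js) (word_Omega (VW_sum_e \<alpha> i M) b js)
           = [(map (\<lambda>j x. b j * (\<alpha> 0 [] * delta i x)) js, 1)]"
proof (induction js)
  case (Cons j js)
  let ?v = "word_Omega (VW_sum_e \<alpha> i M) b js"
  have "homog_part (Suc (length js)) (ext_op (VW_sum_e \<alpha> i M) ?v)
      = ext_op (\<lambda>t. homog_part (Suc (length (fst t))) (VW_sum_e \<alpha> i M t)) (homog_part (length js) ?v)"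
    by (rule homog_part_ext_op[OF degree_le_word_Omega degree_le_VW_sum_e])
  with Cons.IH show ?case
    by (simp add: homog_part_ext_op_lam_e homog_part_VW_sum_e[OF assms])
qed (simp add: Omega_def)

lemma word_Omega_VW_sum_e_Suc:
  assumes "0 < N" and "length js \<le> N"
  shows "word_Omega (VW_sum_e \<alpha> i (Suc N)) b js = word_Omega (VW_sum_e \<alpha> i N) b js"
  using assms(2)
proof (induction js)
  case (Cons j js)
  let ?v = "word_Omega (VW_sum_e \<alpha> i N) b js"
  have "ext_op (VW_sum_e \<alpha> i (Suc N)) ?v = ext_op (VW_sum_e \<alpha> i N) ?v"
  proof (rule ext_op_cong)
    fix t assume "t \<in> set ?v"
    with degree_le_word_Omega[of js] Cons.prems have "length (fst t) < N"
      by (fastforce simp: degree_le_def)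
    then show "VW_sum_e \<alpha> i (Suc N) t = VW_sum_e \<alpha> i N t"
      by (simp add: VW_sum_e_Suc V_e_W_e_short[OF assms(1)])
  qed
  with Cons show ?case
    by simp
qed simp

theorem mainTheorem8:
  fixes \<iota> :: "complex \<Rightarrow> 'b::{real_normed_algebra_1,banach}"
    and \<alpha> :: "nat \<Rightarrow> 'b list \<Rightarrow> 'b"
    and i :: 'i and N :: nat and b :: "nat \<Rightarrow> 'b"
  assumes "complex_structure \<iota>"
    and "N \<ge> 1"
    and "\<forall>n\<in>{1..N}. bounded_multilinear_n \<iota> n (\<alpha> n)"
  shows "E_word (VW_sum_e \<alpha> i (Suc N)) b N
           = b 0 * \<alpha> N (map (\<lambda>j. b j * \<alpha> 0 []) [1..<Suc N]) + E_word (VW_sum_e \<alpha> i N) b N"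
proof -
  have N: "0 < N"
    using assms(2) by simp
  define v where "v = word_Omega (VW_sum_e \<alpha> i N) b [1..<Suc N]"
  define ds where "ds = map (\<lambda>j x. b j * (\<alpha> 0 [] * delta i x)) [1..<Suc N]"
  have deg: "degree_le N v"
    using degree_le_word_Omega[of "[1..<Suc N]"] unfolding v_def length_upt diff_Suc_1 .
  have top: "homog_part N v = [(ds, 1)]"
    using homog_part_word_Omega[OF N, of "[1..<Suc N]"] unfolding v_def ds_def length_upt diff_Suc_1 .
  have args: "map (\<lambda>d. d i) ds = map (\<lambda>j. b j * \<alpha> 0 []) [1..<Suc N]"
    by (simp add: ds_def delta_def)
  have "word_Omega (VW_sum_e \<alpha> i (Suc N)) b [1..<Suc N] = v"
    unfolding v_def by (rule word_Omega_VW_sum_e_Suc[OF N]) simp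
  then have "E_word (VW_sum_e \<alpha> i (Suc N)) b N = b 0 * Pproj (ext_op (VW_sum_e \<alpha> i (Suc N)) v)"
    by (simp only: E_word_eq_Pproj)
  also have "\<dots> = b 0 * (Pproj (ext_op (VW_sum_e \<alpha> i N) v) + \<alpha> N (map (\<lambda>d. d i) ds))"
    by (simp add: Pproj_ext_op_VW_sum_e_Suc Pproj_ext_op_V_e_W_e_top[OF N deg top])
  also have "\<dots> = b 0 * \<alpha> N (map (\<lambda>j. b j * \<alpha> 0 []) [1..<Suc N]) + E_word (VW_sum_e \<alpha> i N) b N"
    unfolding E_word_eq_Pproj v_def[symmetric] args by (simp add: distrib_left)
  finally show ?thesis .
qed

end
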